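(* Let $(Q,\cdot)$ be a finite Ward quasigroup of order $n$ with $xx=e$ for all $x$. If $(Q,\cdot)$ is $k$-translatable (with respect to some ordering of $Q$ as $1,\ldots,n$), where $1\le k<n$, then $k=1$, and $(Q,\cdot)$ is induced by a cyclic group, i.e. the group $(Q,\circ)$ with $x\circ y=x\cdot(e\cdot y)$ is cyclic.
   Context: A Ward quasigroup is a quasigroup (a magma in which $ax=b$, $ya=b$ have unique solutions) satisfying $(xz)(yz)=xy$ for all $x,y,z$; it has an element $e$ with $xx=e$ for all $x$, and $x\circ y=x(ey)$ defines a group with identity $e$ from which $(Q,\cdot)$ is recovered by $xy=x\circ y^{-1}$. With $Q=\{1,\ldots,n\}$ and $[i]_n$ denoting $i$ modulo $n$ (with $0$ identified with $n$), a magma is $k$-translatable ($1\le k<n$) if $i\cdot j=[i+1]_n\cdot[j+k]_n$ for all $i,j\in Q$. *)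

theory Defs
  imports "HOL-Algebra.Generated_Groups"
begin

definition quasigroup_on :: "'a set \<Rightarrow> ('a \<Rightarrow> 'a \<Rightarrow> 'a) \<Rightarrow> bool" where
  "quasigroup_on Q m \<longleftrightarrow>
     (\<forall>x\<in>Q. \<forall>y\<in>Q. m x y \<in> Q) \<and>
     (\<forall>a\<in>Q. \<forall>b\<in>Q. \<exists>!x. x \<in> Q \<and> m a x = b) \<and>
     (\<forall>a\<in>Q. \<forall>b\<in>Q. \<exists>!y. y \<in> Q \<and> m y a = b)"

definition ward_quasigroup :: "'a set \<Rightarrow> ('a \<Rightarrow> 'a \<Rightarrow> 'a) \<Rightarrow> bool" where
  "ward_quasigroup Q m \<longleftrightarrow> quasigroup_on Q m \<and>
     (\<forall>x\<in>Q. \<forall>y\<in>Q. \<forall>z\<in>Q. m (m x z) (m y z) = m x y)"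

definition modn :: "nat \<Rightarrow> nat \<Rightarrow> nat" where
  "modn n i = (if i mod n = 0 then n else i mod n)"

text \<open>k-translatable with respect to the ordering \<sigma> : {1..n} \<rightarrow> Q (the i-th element is \<sigma> i).\<close>
definition translatable :: "nat \<Rightarrow> (nat \<Rightarrow> 'a) \<Rightarrow> ('a \<Rightarrow> 'a \<Rightarrow> 'a) \<Rightarrow> nat \<Rightarrow> bool" where
  "translatable n \<sigma> m k \<longleftrightarrow> 1 \<le> k \<and> k < n \<and>
     (\<forall>i\<in>{1..n}. \<forall>j\<in>{1..n}.
        m (\<sigma> i) (\<sigma> j) = m (\<sigma> (modn n (i + 1))) (\<sigma> (modn n (j + k))))"

definition ward_group :: "'a set \<Rightarrow> ('a \<Rightarrow> 'a \<Rightarrow> 'a) \<Rightarrow> 'a \<Rightarrow> 'a monoid" where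
  "ward_group Q m e = \<lparr>carrier = Q, mult = (\<lambda>x y. m x (m e y)), one = e\<rparr>"

end

theory Submission
  imports Defs
begin

text \<open>
  With x \<circ> y = x (e y), a Ward quasigroup becomes a group in which x y = x \<circ> y\<inverse>.
  Translatability for j = 1 then says \<sigma>(i+1) = \<sigma>(i) \<circ> d with the fixed element
  d = \<sigma>(1)\<inverse> \<circ> \<sigma>(1+k): the enumeration walks through Q by right multiplication by d,
  so Q = \<sigma>(1) \<circ> \<langle>d\<rangle> = \<langle>d\<rangle>. Independently, i = j = 1 gives
  e = \<sigma>(1) \<sigma>(1) = \<sigma>(2) \<sigma>(1+k), and since x y = e only for x = y, \<sigma>(2) = \<sigma>(1+k), i.e. k = 1.
\<close>

lemma modn_in_range: "0 < n \<Longrightarrow> modn n i \<in> {1..n}"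
  unfolding modn_def by auto

lemma modn_eq_iff: "0 < n \<Longrightarrow> modn n a = modn n b \<longleftrightarrow> a mod n = b mod n"
  unfolding modn_def by (metis mod_mod_trivial mod_self)

lemma modn_modn_Suc: "0 < n \<Longrightarrow> modn n (modn n i + 1) = modn n (i + 1)"
  unfolding modn_def by (simp add: mod_Suc_eq Suc_eq_plus1[symmetric] mod_Suc)

lemma modn_id: "i \<in> {1..n} \<Longrightarrow> modn n i = i"
  unfolding modn_def by (cases "i = n") auto

locale ward =
  fixes Q :: "'a set" and m :: "'a \<Rightarrow> 'a \<Rightarrow> 'a" and e :: 'a
  assumes ward_quasigroup: "ward_quasigroup Q m"
    and e_in: "e \<in> Q"
    and square: "x \<in> Q \<Longrightarrow> m x x = e"
begin

lemma quasigroup: "quasigroup_on Q m"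
  using ward_quasigroup unfolding ward_quasigroup_def by simp

lemma closed: "x \<in> Q \<Longrightarrow> y \<in> Q \<Longrightarrow> m x y \<in> Q"
  using quasigroup unfolding quasigroup_on_def by simp

lemma ward_law: "x \<in> Q \<Longrightarrow> y \<in> Q \<Longrightarrow> z \<in> Q \<Longrightarrow> m (m x z) (m y z) = m x y"
  using ward_quasigroup unfolding ward_quasigroup_def by simp

lemma left_cancel: "a \<in> Q \<Longrightarrow> y \<in> Q \<Longrightarrow> y' \<in> Q \<Longrightarrow> m a y = m a y' \<Longrightarrow> y = y'"
  using quasigroup closed unfolding quasigroup_on_def by (metis (no_types, lifting))

lemma right_solvable: "a \<in> Q \<Longrightarrow> b \<in> Q \<Longrightarrow> \<exists>y\<in>Q. m y a = b"
  using quasigroup unfolding quasigroup_on_def by (simp add: Bex_def ex1_implies_ex)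

lemma mult_eq_e_iff: "x \<in> Q \<Longrightarrow> y \<in> Q \<Longrightarrow> m x y = e \<longleftrightarrow> x = y"
  using left_cancel[of x y x] square[of x] by auto

lemma right_unit: "x \<in> Q \<Longrightarrow> m x e = x"
proof -
  assume "x \<in> Q"
  then obtain y where "y \<in> Q" "m y e = x"
    using right_solvable[OF e_in] by blast
  then show "m x e = x"
    using ward_law[of y e e] square[OF e_in] e_in by simp
qed

lemma e_mult: "x \<in> Q \<Longrightarrow> y \<in> Q \<Longrightarrow> m e (m x y) = m y x"
  using ward_law square by metis

lemma e_e_mult: "x \<in> Q \<Longrightarrow> m e (m e x) = x"
  using e_mult[OF e_in] right_unit by simp

sublocale G: group "ward_group Q m e"
proof (rule groupI)
  fix x y z
  assume "x \<in> carrier (ward_group Q m e)" "y \<in> carrier (ward_group Q m e)"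
    "z \<in> carrier (ward_group Q m e)"
  then have x: "x \<in> Q" and y: "y \<in> Q" and z: "z \<in> Q"
    by (simp_all add: ward_group_def)
  have ez: "m e z \<in> Q" and ey: "m e y \<in> Q"
    using closed e_in y z by auto
  have "m (m (m e z) y) (m e y) = m e z"
    using ward_law[OF ez e_in y] right_unit[OF ez] by simp
  then have "m (m x (m e y)) (m e z) = m x (m (m e z) y)"
    using ward_law[OF x closed[OF ez y] ey] by simp
  also have "\<dots> = m x (m e (m y (m e z)))"
    using e_mult[OF y ez] by simp
  finally show "x \<otimes>\<^bsub>ward_group Q m e\<^esub> y \<otimes>\<^bsub>ward_group Q m e\<^esub> z =
      x \<otimes>\<^bsub>ward_group Q m e\<^esub> (y \<otimes>\<^bsub>ward_group Q m e\<^esub> z)"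
    by (simp add: ward_group_def)
next
  fix x assume "x \<in> carrier (ward_group Q m e)"
  then show "\<exists>y\<in>carrier (ward_group Q m e).
      y \<otimes>\<^bsub>ward_group Q m e\<^esub> x = \<one>\<^bsub>ward_group Q m e\<^esub>"
    using e_in closed square e_e_mult by (intro bexI[of _ "m e x"]) (auto simp: ward_group_def)
qed (use closed e_in e_e_mult in \<open>auto simp: ward_group_def\<close>)

lemma inv_ward_group: "y \<in> Q \<Longrightarrow> inv\<^bsub>ward_group Q m e\<^esub> y = m e y"
  using e_in closed square e_e_mult by (intro G.inv_equality) (auto simp: ward_group_def)

lemma mult_eq_div: "x \<in> Q \<Longrightarrow> y \<in> Q \<Longrightarrow>
    m x y = x \<otimes>\<^bsub>ward_group Q m e\<^esub> inv\<^bsub>ward_group Q m e\<^esub> y"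
  using inv_ward_group e_e_mult by (simp add: ward_group_def)

lemma translatable_imp_k_eq_1:
  assumes \<sigma>: "bij_betw \<sigma> {1..n} Q" and tr: "translatable n \<sigma> m k"
  shows "k = 1"
proof -
  have k: "1 \<le> k" "k < n" and n: "0 < n"
    using tr unfolding translatable_def by auto
  have one: "1 \<in> {1..n}"
    using n by simp
  have in_Q: "\<sigma> (modn n i) \<in> Q" for i
    using \<sigma> modn_in_range[OF n] bij_betwE by blast
  have "m (\<sigma> (modn n 2)) (\<sigma> (modn n (1 + k))) = e"
    using tr one square[OF in_Q[of 1]] modn_id[OF one]
    unfolding translatable_def by (simp add: numeral_2_eq_2)
  then have "\<sigma> (modn n 2) = \<sigma> (modn n (1 + k))"
    using mult_eq_e_iff in_Q by blast
  then have "modn n 2 = modn n (1 + k)"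
    using \<sigma> modn_in_range[OF n] unfolding bij_betw_def inj_on_def by blast
  then have "2 mod n = (1 + k) mod n"
    using modn_eq_iff[OF n] by blast
  with k show "k = 1"
    by (cases "1 + k = n") (auto dest: dvd_imp_le)
qed

lemma translatable_shift:
  assumes \<sigma>: "\<sigma> ` {1..n} \<subseteq> Q" and tr: "translatable n \<sigma> m k" and i: "i \<in> {1..n}"
  shows "\<sigma> (modn n (i + 1)) = \<sigma> i \<otimes>\<^bsub>ward_group Q m e\<^esub>
    (inv\<^bsub>ward_group Q m e\<^esub> \<sigma> 1 \<otimes>\<^bsub>ward_group Q m e\<^esub> \<sigma> (modn n (1 + k)))"
    (is "?next = \<sigma> i \<otimes>\<^bsub>?G\<^esub> (inv\<^bsub>?G\<^esub> \<sigma> 1 \<otimes>\<^bsub>?G\<^esub> ?b)")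
proof -
  have n: "0 < n" and one: "1 \<in> {1..n}"
    using tr unfolding translatable_def by auto
  have in_G: "\<sigma> j \<in> carrier ?G" if "j \<in> {1..n}" for j
    using \<sigma> that by (auto simp: ward_group_def)
  have next_in: "?next \<in> carrier ?G" and b_in: "?b \<in> carrier ?G"
    using in_G modn_in_range[OF n] by auto
  have "\<sigma> i \<otimes>\<^bsub>?G\<^esub> inv\<^bsub>?G\<^esub> \<sigma> 1 = ?next \<otimes>\<^bsub>?G\<^esub> inv\<^bsub>?G\<^esub> ?b"
    using tr i one in_G next_in b_in mult_eq_div
    unfolding translatable_def by (simp add: ward_group_def)
  then have "?next = \<sigma> i \<otimes>\<^bsub>?G\<^esub> inv\<^bsub>?G\<^esub> \<sigma> 1 \<otimes>\<^bsub>?G\<^esub> ?b"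
    using next_in b_in by (simp add: G.m_assoc)
  then show ?thesis
    using in_G i one b_in by (simp add: G.m_assoc)
qed

end

lemma (in group) enumeration_shift_pow:
  assumes n: "0 < n" and \<sigma>: "\<sigma> ` {1..n} \<subseteq> carrier G" and d: "d \<in> carrier G"
    and shift: "\<And>i. i \<in> {1..n} \<Longrightarrow> \<sigma> (modn n (i + 1)) = \<sigma> i \<otimes> d"
  shows "\<sigma> (modn n (1 + t)) = \<sigma> 1 \<otimes> d [^] t"
proof (induction t)
  case 0
  then show ?case
    using \<sigma> n modn_id[of 1 n] by (simp add: image_subset_iff)
next
  case (Suc t)
  have "\<sigma> (modn n (1 + Suc t)) = \<sigma> (modn n (modn n (1 + t) + 1))"
    using modn_modn_Suc[OF n, of "1 + t"] by simp
  also have "\<dots> = \<sigma> (modn n (1 + t)) \<otimes> d"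
    using shift modn_in_range[OF n] by blast
  also have "\<dots> = \<sigma> 1 \<otimes> d [^] Suc t"
    using Suc \<sigma> n d by (simp add: m_assoc image_subset_iff)
  finally show ?case .
qed

lemma (in group) carrier_eq_generate_if_coset_powers:
  assumes a: "a \<in> carrier G" and d: "d \<in> carrier G"
    and cover: "carrier G \<subseteq> {a \<otimes> d [^] (t :: nat) | t. True}"
  shows "carrier G = generate G {d}"
proof
  interpret H: subgroup "generate G {d}" G
    using generate_is_subgroup d by simp
  have pow: "d [^] (t :: nat) \<in> generate G {d}" for t
    using generate_pow[OF d] by (metis (mono_tags, lifting) UNIV_I int_pow_int mem_Collect_eq)
  obtain t0 where "\<one> = a \<otimes> d [^] (t0 :: nat)"
    using cover one_closed by blast
  then have "a = inv (d [^] t0)"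
    using a d by (simp add: inv_equality)
  then have a_in: "a \<in> generate G {d}"
    using pow by simp
  show "carrier G \<subseteq> generate G {d}"
  proof
    fix x assume "x \<in> carrier G"
    then obtain t where "x = a \<otimes> d [^] (t :: nat)"
      using cover by blast
    then show "x \<in> generate G {d}"
      using a_in pow by simp
  qed
qed (use generate_incl d in blast)

lemma (in group) carrier_eq_generate_if_enumeration_shift:
  assumes \<sigma>: "\<sigma> ` {1..n} = carrier G" and d: "d \<in> carrier G"
    and shift: "\<And>i. i \<in> {1..n} \<Longrightarrow> \<sigma> (modn n (i + 1)) = \<sigma> i \<otimes> d"
  shows "carrier G = generate G {d}"
proof (rule carrier_eq_generate_if_coset_powers[OF _ d])
  have n: "0 < n"
  proof (rule ccontr)
    assume "\<not> 0 < n"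
    then have "carrier G = {}"
      using \<sigma> by simp
    then show False
      using one_closed by simp
  qed
  then show "\<sigma> 1 \<in> carrier G"
    using \<sigma> by auto
  have pow: "\<sigma> (modn n (1 + t)) = \<sigma> 1 \<otimes> d [^] t" for t
    using enumeration_shift_pow[OF n _ d, of \<sigma>] shift \<sigma> by simp
  show "carrier G \<subseteq> {\<sigma> 1 \<otimes> d [^] (t :: nat) | t. True}"
  proof
    fix x assume "x \<in> carrier G"
    then obtain i where "i \<in> {1..n}" "x = \<sigma> i"
      using \<sigma> by blast
    then have "x = \<sigma> (modn n (1 + (i - 1)))"
      using modn_id by simp
    then show "x \<in> {\<sigma> 1 \<otimes> d [^] (t :: nat) | t. True}"
      using pow by blast
  qed
qed

theorem theorem4p16:
  fixes Q :: "'a set" and m :: "'a \<Rightarrow> 'a \<Rightarrow> 'a" and e :: 'a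
    and n k :: nat and \<sigma> :: "nat \<Rightarrow> 'a"
  assumes "finite Q" and "card Q = n"
    and "ward_quasigroup Q m"
    and "e \<in> Q" and "\<forall>x\<in>Q. m x x = e"
    and "bij_betw \<sigma> {1..n} Q"
    and "1 \<le> k" and "k < n"
    and "translatable n \<sigma> m k"
  shows "k = 1 \<and> group (ward_group Q m e) \<and>
         (\<exists>g\<in>Q. carrier (ward_group Q m e) = generate (ward_group Q m e) {g})"
proof -
  interpret ward Q m e
    using assms(3-5) by unfold_locales auto
  let ?G = "ward_group Q m e"
  define d where "d = inv\<^bsub>?G\<^esub> \<sigma> 1 \<otimes>\<^bsub>?G\<^esub> \<sigma> (modn n (1 + k))"
  have carrier: "carrier ?G = Q"
    by (simp add: ward_group_def)
  have n: "0 < n" and \<sigma>: "\<sigma> ` {1..n} = Q"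
    using assms(6-8) bij_betw_imp_surj_on by auto
  have "\<sigma> 1 \<in> Q" and "\<sigma> (modn n (1 + k)) \<in> Q"
    using \<sigma> n modn_in_range[OF n] by auto
  then have d: "d \<in> Q"
    unfolding d_def using G.m_closed G.inv_closed carrier by simp
  have "\<sigma> (modn n (i + 1)) = \<sigma> i \<otimes>\<^bsub>?G\<^esub> d" if "i \<in> {1..n}" for i
    using translatable_shift[OF _ assms(9) that] \<sigma> unfolding d_def by simp
  then have "carrier ?G = generate ?G {d}"
    using G.carrier_eq_generate_if_enumeration_shift \<sigma> d carrier by simp
  then show ?thesis
    using translatable_imp_k_eq_1[OF assms(6,9)] G.is_group d by blast
qed

end
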